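(* $\mathrm{Log}_{>1}(\mathbb{Q})\subsetneq \mathrm{Log}_{>1}(\mathbb{R})$; that is, $\mathrm{Log}_{>1}(\mathbb{Q})$ is strictly contained in $\mathrm{Log}_{>1}(\mathbb{R})$.
   Context: Modal formulas are built from a countable set of propositional variables using $\bot$, $\to$ and one unary modality $\lozenge$. A frame is a pair $(X,R)$; a valuation assigns subsets of $X$ to variables; $x\models\lozenge\varphi$ iff there is $y$ with $xRy$ and $y\models\varphi$. A formula is valid in a frame if true at every point under every valuation. For a metric space $(X,d)$, $\mathrm{Log}_{>1}(X)$ is the set of modal formulas valid in the frame $(X,R_{>1})$, where $xR_{>1}y$ iff $d(x,y)>1$. $\mathbb{R}$ and $\mathbb{Q}$ carry the metric $d(x,y)=|x-y|$. *)

theory Defs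
  imports "HOL-Analysis.Analysis"
begin

datatype fm = Var nat | Bot | Imp fm fm | Dia fm

fun sat :: "'a set \<Rightarrow> ('a \<Rightarrow> 'a \<Rightarrow> bool) \<Rightarrow> (nat \<Rightarrow> 'a set) \<Rightarrow> 'a \<Rightarrow> fm \<Rightarrow> bool" where
  "sat X R V x (Var p) = (x \<in> V p)"
| "sat X R V x Bot = False"
| "sat X R V x (Imp a b) = (sat X R V x a \<longrightarrow> sat X R V x b)"
| "sat X R V x (Dia a) = (\<exists>y\<in>X. R x y \<and> sat X R V y a)"

definition valid_in :: "'a set \<Rightarrow> ('a \<Rightarrow> 'a \<Rightarrow> bool) \<Rightarrow> fm \<Rightarrow> bool" where
  "valid_in X R \<phi> = (\<forall>V. (\<forall>p. V p \<subseteq> X) \<longrightarrow> (\<forall>x\<in>X. sat X R V x \<phi>))"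

definition Log_gt1 :: "'a::metric_space set \<Rightarrow> fm set" where
  "Log_gt1 X = {\<phi>. valid_in X (\<lambda>x y. dist x y > 1) \<phi>}"

end

theory Submission
  imports Defs
begin

(* Inclusion. Fix a valuation V on the reals and a point x. As there are only countably many
   formulas, some countable set E is dense in the truth set of every formula; let D be the closure
   of insert x E under rational translations. Then D \<inter> [x, x+1) and \<rat> \<inter> [0, 1) are countable
   dense orders with a least and no greatest element, so Cantor's back-and-forth argument makes
   them order-isomorphic, and extending the isomorphism by f (q + 1) = f q + 1 gives a bijection
   f : \<rat> \<rightarrow> D that preserves and reflects "distance > 1". Whenever a formula holds at distance
   > 1 from f q it does so at a point of E \<subseteq> D, since that distance condition is open; hence
   truth pulls back along f, and a formula valid on \<rat> holds at x.

   Strictness. On \<real> the modality \<box>\<box> is universal, and \<box>\<box>(p \<leftrightarrow> \<not>\<diamond>p) says that V p is the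
   intersection of the closed unit balls around its points, so V p is closed and convex. Three
   such sets V 0, V 1, V 2 with V 0, V 1 disjoint and covering V 2, which meets both, contradict
   the connectedness of V 2. On \<rat> the formula also admits \<rat> \<inter> [a, a+1] with a irrational,
   and \<rat> \<inter> [c-1, c], \<rat> \<inter> [c, c+1], \<rat> \<inter> [0, 1] for irrational 0 < c < 1 is such a
   configuration. *)

section \<open>Cantor's back-and-forth theorem\<close>

definition partial_iso :: "'a::linorder set \<Rightarrow> 'b::linorder set \<Rightarrow> ('a \<times> 'b) set \<Rightarrow> bool" where
  "partial_iso A B F \<longleftrightarrow> F \<subseteq> A \<times> B \<and>
     (\<forall>p q p' q'. (p, q) \<in> F \<longrightarrow> (p', q') \<in> F \<longrightarrow> (p < p' \<longleftrightarrow> q < q'))"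

lemma partial_iso_converse: "partial_iso A B F \<Longrightarrow> partial_iso B A (converse F)"
  unfolding partial_iso_def by auto

lemma partial_iso_insert:
  assumes F: "partial_iso A B F" and "a \<in> A" "b \<in> B"
    and side: "\<And>p q. (p, q) \<in> F \<Longrightarrow> (p < a \<and> q < b) \<or> (a < p \<and> b < q)"
  shows "partial_iso A B (insert (a, b) F)"
  unfolding partial_iso_def
proof (intro conjI allI impI)
  show "insert (a, b) F \<subseteq> A \<times> B" using F \<open>a \<in> A\<close> \<open>b \<in> B\<close> unfolding partial_iso_def by blast
next
  have ord: "p < p' \<longleftrightarrow> q < q'" if "(p, q) \<in> F" "(p', q') \<in> F" for p q p' q'
    using F that unfolding partial_iso_def by blast
  have ord_new: "(p < a \<longleftrightarrow> q < b) \<and> (a < p \<longleftrightarrow> b < q)" if "(p, q) \<in> F" for p q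
    using side[OF that] by (meson order.asym)
  fix p q p' q' assume "(p, q) \<in> insert (a, b) F" "(p', q') \<in> insert (a, b) F"
  then consider "(p, q) = (a, b)" "(p', q') = (a, b)" | "(p, q) = (a, b)" "(p', q') \<in> F"
    | "(p, q) \<in> F" "(p', q') = (a, b)" | "(p, q) \<in> F" "(p', q') \<in> F"
    by blast
  then show "p < p' \<longleftrightarrow> q < q'"
  proof cases
    case 1
    then show ?thesis by simp
  next
    case 2
    then show ?thesis using ord_new[OF 2(2)] by simp
  next
    case 3
    then show ?thesis using ord_new[OF 3(1)] by simp
  next
    case 4
    then show ?thesis by (rule ord)
  qed
qed

lemma dense_no_max_between_finite:
  fixes B :: "'a::linorder set"
  assumes dense: "\<forall>u\<in>B. \<forall>v\<in>B. u < v \<longrightarrow> (\<exists>w\<in>B. u < w \<and> w < v)"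
    and no_max: "\<forall>u\<in>B. \<exists>w\<in>B. u < w"
    and L: "finite L" "L \<noteq> {}" "L \<subseteq> B" and U: "finite U" "U \<subseteq> B"
    and L_U: "\<And>l u. l \<in> L \<Longrightarrow> u \<in> U \<Longrightarrow> l < u"
  obtains b where "b \<in> B" "\<forall>l\<in>L. l < b" "\<forall>u\<in>U. b < u"
proof (cases "U = {}")
  case True
  have "Max L \<in> B" using Max_in[OF L(1,2)] L(3) by blast
  then obtain w where "w \<in> B" "Max L < w" using no_max by blast
  then show ?thesis using that True Max_ge[OF L(1)] by (meson empty_iff le_less_trans)
next
  case False
  have "Max L \<in> B" "Min U \<in> B" using Max_in[OF L(1,2)] Min_in[OF U(1) False] L(3) U(2) by blast+
  moreover have "Max L < Min U" using L_U Max_in[OF L(1,2)] Min_in[OF U(1) False] .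
  ultimately obtain w where "w \<in> B" "Max L < w" "w < Min U" using dense by blast
  then show ?thesis
    using that Max_ge[OF L(1)] Min_le[OF U(1)] by (meson le_less_trans less_le_trans)
qed

(* Since B has a least element, a point can never be placed below all of B; the pair (a0, b0)
   of least elements guarantees that every new point a has a predecessor in the domain of F. *)
lemma partial_iso_extend_dom:
  assumes F: "partial_iso A B F" "finite F" and a0: "(a0, b0) \<in> F" "\<forall>a\<in>A. a0 \<le> a"
    and dense: "\<forall>u\<in>B. \<forall>v\<in>B. u < v \<longrightarrow> (\<exists>w\<in>B. u < w \<and> w < v)"
    and no_max: "\<forall>u\<in>B. \<exists>w\<in>B. u < w"
    and a: "a \<in> A"
  shows "\<exists>b. partial_iso A B (insert (a, b) F)"
proof (cases "a \<in> Domain F")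
  case True
  then obtain b where "(a, b) \<in> F" by auto
  then show ?thesis using F by (metis insert_absorb)
next
  case False
  have sub: "F \<subseteq> A \<times> B"
    and ord: "\<And>p q p' q'. (p, q) \<in> F \<Longrightarrow> (p', q') \<in> F \<Longrightarrow> p < p' \<longleftrightarrow> q < q'"
    using F unfolding partial_iso_def by auto
  define L where "L = {q. \<exists>p. (p, q) \<in> F \<and> p < a}"
  define U where "U = {q. \<exists>p. (p, q) \<in> F \<and> a < p}"
  have "L \<subseteq> snd ` F" "U \<subseteq> snd ` F" unfolding L_def U_def by force+
  then have fin: "finite L" "finite U" using F(2) finite_subset by blast+
  have "L \<subseteq> B" "U \<subseteq> B" using sub unfolding L_def U_def by blast+
  have "a0 \<noteq> a" using False a0(1) by blast
  then have "a0 < a" using a0(2) a by (simp add: order.strict_iff_order)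
  then have "L \<noteq> {}" unfolding L_def using a0(1) by blast
  have L_U: "q < q'" if q: "q \<in> L" "q' \<in> U" for q q'
  proof -
    obtain p p' where "(p, q) \<in> F" "p < a" "(p', q') \<in> F" "a < p'"
      using q unfolding L_def U_def by blast
    then show "q < q'" using ord by (meson order.strict_trans)
  qed
  obtain b where b: "b \<in> B" "\<forall>q\<in>L. q < b" "\<forall>q\<in>U. b < q"
    by (rule dense_no_max_between_finite[OF dense no_max fin(1) \<open>L \<noteq> {}\<close> \<open>L \<subseteq> B\<close> fin(2)
          \<open>U \<subseteq> B\<close> L_U])
  have "(p < a \<and> q < b) \<or> (a < p \<and> b < q)" if "(p, q) \<in> F" for p q
  proof -
    have "p \<noteq> a" using that False by blast
    then consider "p < a" | "a < p" by (meson linorder_neqE)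
    then show ?thesis
    proof cases
      case 1
      then show ?thesis using that b(2) unfolding L_def by blast
    next
      case 2
      then show ?thesis using that b(3) unfolding U_def by blast
    qed
  qed
  then show ?thesis using partial_iso_insert[OF F(1) a b(1)] by blast
qed

lemma partial_iso_extend_ran:
  assumes F: "partial_iso A B F" "finite F" and b0: "(a0, b0) \<in> F" "\<forall>b\<in>B. b0 \<le> b"
    and dense: "\<forall>u\<in>A. \<forall>v\<in>A. u < v \<longrightarrow> (\<exists>w\<in>A. u < w \<and> w < v)"
    and no_max: "\<forall>u\<in>A. \<exists>w\<in>A. u < w"
    and b: "b \<in> B"
  shows "\<exists>a. partial_iso A B (insert (a, b) F)"
proof -
  have "finite (converse F)" "(b0, a0) \<in> converse F" using F(2) b0(1) by simp_all
  from partial_iso_extend_dom[OF partial_iso_converse[OF F(1)] this b0(2) dense no_max b]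
  obtain a where "partial_iso B A (insert (b, a) (converse F))" ..
  then have "partial_iso A B (converse (insert (b, a) (converse F)))" by (rule partial_iso_converse)
  also have "converse (insert (b, a) (converse F)) = insert (a, b) F" by auto
  finally show ?thesis ..
qed

lemma partial_iso_Union_incseq:
  assumes "incseq C" and "\<And>n. partial_iso A B (C n)"
  shows "partial_iso A B (\<Union>n. C n)"
  unfolding partial_iso_def
proof (intro conjI allI impI)
  show "(\<Union>n. C n) \<subseteq> A \<times> B" using assms(2) unfolding partial_iso_def by blast
next
  fix p q p' q' assume "(p, q) \<in> (\<Union>n. C n)" "(p', q') \<in> (\<Union>n. C n)"
  then obtain m n where "(p, q) \<in> C m" "(p', q') \<in> C n" by blast
  then have "(p, q) \<in> C (max m n)" "(p', q') \<in> C (max m n)"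
    using monoD[OF assms(1), of m "max m n"] monoD[OF assms(1), of n "max m n"] by auto
  then show "p < p' \<longleftrightarrow> q < q'" using assms(2) unfolding partial_iso_def by blast
qed

lemma partial_iso_total:
  assumes F: "partial_iso A B F" and dom: "A \<subseteq> Domain F" and ran: "B \<subseteq> Range F"
  obtains g where "g ` A = B" "strict_mono_on A g"
proof
  define g where "g a = (SOME b. (a, b) \<in> F)" for a
  have g: "(a, g a) \<in> F" if "a \<in> A" for a
    unfolding g_def using dom that by (auto intro: someI)
  have ord: "p < p' \<longleftrightarrow> q < q'" if "(p, q) \<in> F" "(p', q') \<in> F" for p q p' q'
    using F that unfolding partial_iso_def by blast
  have F_graph: "a \<in> A \<and> b = g a" if ab: "(a, b) \<in> F" for a b
  proof
    show "a \<in> A" using F ab unfolding partial_iso_def by blast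
    then have ga: "(a, g a) \<in> F" by (rule g)
    have "\<not> b < g a" "\<not> g a < b"
      using ord[OF ab ga] ord[OF ga ab] by simp_all
    then show "b = g a" by (meson linorder_neqE)
  qed
  show "g ` A = B"
  proof
    show "g ` A \<subseteq> B" using F g unfolding partial_iso_def by blast
    show "B \<subseteq> g ` A" using ran F_graph by blast
  qed
  show "strict_mono_on A g"
  proof (rule strict_mono_onI)
    fix r s assume "r \<in> A" "s \<in> A" "r < s"
    then show "g r < g s" using ord[OF g g] by blast
  qed
qed

lemma partial_iso_extend:
  assumes F: "partial_iso A B F" "finite F" "(a0, b0) \<in> F"
    and least: "\<forall>a\<in>A. a0 \<le> a" "\<forall>b\<in>B. b0 \<le> b"
    and dense_A: "\<forall>u\<in>A. \<forall>v\<in>A. u < v \<longrightarrow> (\<exists>w\<in>A. u < w \<and> w < v)"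
    and no_max_A: "\<forall>u\<in>A. \<exists>w\<in>A. u < w"
    and dense_B: "\<forall>u\<in>B. \<forall>v\<in>B. u < v \<longrightarrow> (\<exists>w\<in>B. u < w \<and> w < v)"
    and no_max_B: "\<forall>u\<in>B. \<exists>w\<in>B. u < w"
    and "a \<in> A" "b \<in> B"
  shows "\<exists>F'. partial_iso A B F' \<and> finite F' \<and> (a0, b0) \<in> F' \<and> F \<subseteq> F' \<and>
    a \<in> Domain F' \<and> b \<in> Range F'"
proof -
  obtain b' where "partial_iso A B (insert (a, b') F)"
    using partial_iso_extend_dom[OF F least(1) dense_B no_max_B \<open>a \<in> A\<close>] ..
  moreover have "finite (insert (a, b') F)" "(a0, b0) \<in> insert (a, b') F" using F(2,3) by simp_all
  ultimately obtain a' where "partial_iso A B (insert (a', b) (insert (a, b') F))"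
    using partial_iso_extend_ran[OF _ _ _ least(2) dense_A no_max_A \<open>b \<in> B\<close>] by blast
  then show ?thesis using F(2,3) by (intro exI[of _ "insert (a', b) (insert (a, b') F)"]) auto
qed

theorem countable_dense_order_iso:
  fixes A :: "'a::linorder set" and B :: "'b::linorder set"
  assumes countable: "countable A" "countable B"
    and least: "a0 \<in> A" "\<forall>a\<in>A. a0 \<le> a" "b0 \<in> B" "\<forall>b\<in>B. b0 \<le> b"
    and dense_A: "\<forall>u\<in>A. \<forall>v\<in>A. u < v \<longrightarrow> (\<exists>w\<in>A. u < w \<and> w < v)"
    and no_max_A: "\<forall>u\<in>A. \<exists>w\<in>A. u < w"
    and dense_B: "\<forall>u\<in>B. \<forall>v\<in>B. u < v \<longrightarrow> (\<exists>w\<in>B. u < w \<and> w < v)"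
    and no_max_B: "\<forall>u\<in>B. \<exists>w\<in>B. u < w"
  obtains g where "g ` A = B" "strict_mono_on A g"
proof -
  define step where "step F F' n \<longleftrightarrow> partial_iso A B F' \<and> finite F' \<and> (a0, b0) \<in> F' \<and>
    F \<subseteq> F' \<and> from_nat_into A n \<in> Domain F' \<and> from_nat_into B n \<in> Range F'" for F F' n
  define C where "C = rec_nat {(a0, b0)} (\<lambda>n F. SOME F'. step F F' n)"
  have "A \<noteq> {}" "B \<noteq> {}" using least(1,3) by auto
  then have enum: "from_nat_into A n \<in> A" "from_nat_into B n \<in> B" for n
    by (simp_all add: from_nat_into)
  have ex: "\<exists>F'. step F F' n" if "partial_iso A B F" "finite F" "(a0, b0) \<in> F" for F n
    unfolding step_def
    by (rule partial_iso_extend[OF that least(2,4) dense_A no_max_A dense_B no_max_B enum])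
  have C_Suc: "C (Suc n) = (SOME F'. step (C n) F' n)" for n unfolding C_def by simp
  have C_step: "partial_iso A B (C n) \<and> finite (C n) \<and> (a0, b0) \<in> C n \<and> step (C n) (C (Suc n)) n"
    for n
  proof (induction n)
    case 0
    have C0: "partial_iso A B (C 0)" "finite (C 0)" "(a0, b0) \<in> C 0"
      using least unfolding C_def partial_iso_def by auto
    then show ?case unfolding C_Suc using someI_ex[OF ex[OF C0]] by blast
  next
    case (Suc n)
    then have C_n: "partial_iso A B (C (Suc n))" "finite (C (Suc n))" "(a0, b0) \<in> C (Suc n)"
      unfolding step_def by simp_all
    then show ?case unfolding C_Suc[of "Suc n"] using someI_ex[OF ex[OF C_n]] by blast
  qed
  have "incseq C" by (rule incseq_SucI) (use C_step in \<open>simp add: step_def\<close>)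
  then have F: "partial_iso A B (\<Union>n. C n)"
    by (rule partial_iso_Union_incseq) (use C_step in blast)
  have C_dom: "from_nat_into A n \<in> Domain (\<Union>n. C n)"
    and C_ran: "from_nat_into B n \<in> Range (\<Union>n. C n)" for n
    using C_step[of n] unfolding step_def by blast+
  have "A \<subseteq> Domain (\<Union>n. C n)" "B \<subseteq> Range (\<Union>n. C n)"
    using C_dom C_ran from_nat_into_to_nat_on[OF countable(1)]
      from_nat_into_to_nat_on[OF countable(2)]
    by (metis subsetI)+
  then show ?thesis by (rule partial_iso_total[OF F]) (rule that)
qed

section \<open>Copies of \<open>\<rat>\<close> inside the reals\<close>

lemma countable_rat_shift_hull:
  fixes E :: "real set"
  assumes "countable E"
  obtains D where "countable D" "E \<subseteq> D" "\<forall>d\<in>D. \<forall>r\<in>\<rat>. d + r \<in> D"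
proof
  let ?D = "(\<lambda>(e, r). e + r) ` (E \<times> \<rat>)"
  show "countable ?D" using assms countable_rat by auto
  show "E \<subseteq> ?D"
  proof
    fix e assume "e \<in> E"
    then have "(e, 0) \<in> E \<times> \<rat>" by simp
    then show "e \<in> ?D" by (force intro: image_eqI)
  qed
  show "\<forall>d\<in>?D. \<forall>r\<in>\<rat>. d + r \<in> ?D"
  proof (intro ballI)
    fix d r :: real assume "d \<in> ?D" "r \<in> \<rat>"
    then obtain e r' where "e \<in> E" "r' \<in> \<rat>" "d = e + r'" by auto
    then have "(e, r' + r) \<in> E \<times> \<rat>" "d + r = e + (r' + r)" using \<open>r \<in> \<rat>\<close> by simp_all
    then show "d + r \<in> ?D" using image_eqI[of "d + r" "\<lambda>(e, r). e + r" "(e, r' + r)"] by simp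
  qed
qed

lemma rat_shift_closed_interval_dense:
  fixes X :: "real set"
  assumes shift: "\<And>d r. d \<in> X \<Longrightarrow> r \<in> \<rat> \<Longrightarrow> d + r \<in> X"
  shows "\<forall>u\<in>X \<inter> {a..<b}. \<forall>v\<in>X \<inter> {a..<b}. u < v \<longrightarrow> (\<exists>w\<in>X \<inter> {a..<b}. u < w \<and> w < v)"
    and "\<forall>u\<in>X \<inter> {a..<b}. \<exists>w\<in>X \<inter> {a..<b}. u < w"
proof -
  have between: "\<exists>w\<in>X \<inter> {a..<b}. u < w \<and> w < v"
    if uv: "u \<in> X \<inter> {a..<b}" "u < v" "v \<le> b" for u v
  proof -
    obtain r where "r \<in> \<rat>" "0 < r" "r < v - u" using Rats_dense_in_real[of 0 "v - u"] uv(2) by auto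
    then show ?thesis using shift[of u r] uv by (intro bexI[of _ "u + r"]) auto
  qed
  show "\<forall>u\<in>X \<inter> {a..<b}. \<forall>v\<in>X \<inter> {a..<b}. u < v \<longrightarrow> (\<exists>w\<in>X \<inter> {a..<b}. u < w \<and> w < v)"
  proof (intro ballI impI)
    fix u v assume "u \<in> X \<inter> {a..<b}" "v \<in> X \<inter> {a..<b}" "u < v"
    then show "\<exists>w\<in>X \<inter> {a..<b}. u < w \<and> w < v" using between[of u v] by simp
  qed
  show "\<forall>u\<in>X \<inter> {a..<b}. \<exists>w\<in>X \<inter> {a..<b}. u < w"
  proof
    fix u assume "u \<in> X \<inter> {a..<b}"
    then show "\<exists>w\<in>X \<inter> {a..<b}. u < w" using between[of u b] by auto
  qed
qed

lemma rat_shift_closed_unit_interval_iso: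
  fixes D :: "real set"
  assumes "countable D" "c \<in> D" and shift: "\<And>d r. d \<in> D \<Longrightarrow> r \<in> \<rat> \<Longrightarrow> d + r \<in> D"
  obtains g where "g ` (\<rat> \<inter> {0..<1::real}) = D \<inter> {c..<c+1}" "strict_mono_on (\<rat> \<inter> {0..<1}) g"
proof -
  have countable: "countable (\<rat> \<inter> {0..<1::real})" "countable (D \<inter> {c..<c+1})"
    using countable_rat \<open>countable D\<close> by auto
  have least: "0 \<in> \<rat> \<inter> {0..<1::real}" "\<forall>a\<in>\<rat> \<inter> {0..<1::real}. 0 \<le> a"
    "c \<in> D \<inter> {c..<c+1}" "\<forall>b\<in>D \<inter> {c..<c+1}. c \<le> b"
    using \<open>c \<in> D\<close> by auto
  show ?thesis
    using countable_dense_order_iso[OF countable least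
        rat_shift_closed_interval_dense[OF Rats_add, where a = 0 and b = 1]
        rat_shift_closed_interval_dense[OF shift, where a = c and b = "c + 1"]]
      that
    by blast
qed

lemma periodic_extension:
  fixes g :: "real \<Rightarrow> real"
  assumes X: "\<And>x k. x \<in> X \<Longrightarrow> x + of_int k \<in> X" and Y: "\<And>y k. y \<in> Y \<Longrightarrow> y + of_int k \<in> Y"
    and g: "g ` (X \<inter> {0..<1}) = Y \<inter> {c..<c+1}" "strict_mono_on (X \<inter> {0..<1}) g"
  obtains f where "f ` X = Y" "strict_mono_on X f" "\<forall>x. f (x + 1) = f x + 1"
proof
  define f where "f x = g (frac x) + of_int \<lfloor>x\<rfloor>" for x
  have frac_in: "frac x \<in> X \<inter> {0..<1}" if "x \<in> X" for x
    using X[OF that, of "- \<lfloor>x\<rfloor>"] frac_lt_1[of x] by (simp add: frac_def)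
  have g_in: "g a \<in> Y" "c \<le> g a" "g a < c + 1" if "a \<in> X \<inter> {0..<1}" for a
    using g(1) that by auto
  show "\<forall>x. f (x + 1) = f x + 1"
    unfolding f_def by (simp add: frac_1_eq)
  show "strict_mono_on X f"
  proof (rule strict_mono_onI)
    fix x y assume xy: "x \<in> X" "y \<in> X" "x < y"
    show "f x < f y"
    proof (cases "\<lfloor>x\<rfloor> = \<lfloor>y\<rfloor>")
      case True
      then have "frac x < frac y" using xy(3) by (simp add: frac_def)
      then show ?thesis
        unfolding f_def using True strict_mono_onD[OF g(2) frac_in frac_in] xy by simp
    next
      case False
      then have "\<lfloor>x\<rfloor> + 1 \<le> \<lfloor>y\<rfloor>" using floor_mono[of x y] xy(3) by linarith
      then show ?thesis
        unfolding f_def using g_in[OF frac_in[OF xy(1)]] g_in[OF frac_in[OF xy(2)]] by linarith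
    qed
  qed
  show "f ` X = Y"
  proof
    show "f ` X \<subseteq> Y"
    proof (rule image_subsetI)
      fix x assume "x \<in> X"
      then show "f x \<in> Y" unfolding f_def using Y[OF g_in(1)[OF frac_in]] by simp
    qed
    show "Y \<subseteq> f ` X"
    proof
      fix y assume "y \<in> Y"
      define k where "k = \<lfloor>y - c\<rfloor>"
      have "y - of_int k \<in> Y" using Y[OF \<open>y \<in> Y\<close>, of "- k"] by simp
      moreover have "c \<le> y - of_int k" "y - of_int k < c + 1" unfolding k_def by linarith+
      ultimately have "y - of_int k \<in> g ` (X \<inter> {0..<1})" using g(1) by simp
      then obtain a where a: "a \<in> X \<inter> {0..<1}" "g a = y - of_int k" by (metis imageE)
      then have "\<lfloor>a + of_int k\<rfloor> = k" "frac (a + of_int k) = a"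
        by (simp_all add: floor_eq_iff frac_def)
      then have "f (a + of_int k) = y" unfolding f_def using a(2) by simp
      moreover have "a + of_int k \<in> X" using X a(1) by blast
      ultimately show "y \<in> f ` X" by blast
    qed
  qed
qed

lemma strict_mono_on_dist_gt_1_iff:
  fixes f :: "real \<Rightarrow> real"
  assumes mono: "strict_mono_on X f" and succ: "\<And>x. x \<in> X \<Longrightarrow> x + 1 \<in> X"
    and shift: "\<And>x. f (x + 1) = f x + 1" and "x \<in> X" "y \<in> X"
  shows "1 < dist x y \<longleftrightarrow> 1 < dist (f x) (f y)"
proof -
  have "f (x + 1) < f y \<longleftrightarrow> x + 1 < y"
    by (rule strict_mono_on_less[OF mono succ[OF \<open>x \<in> X\<close>] \<open>y \<in> X\<close>])
  moreover have "f (y + 1) < f x \<longleftrightarrow> y + 1 < x"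
    by (rule strict_mono_on_less[OF mono succ[OF \<open>y \<in> X\<close>] \<open>x \<in> X\<close>])
  ultimately show ?thesis using shift[of x] shift[of y] unfolding dist_real_def by linarith
qed

lemma rat_shift_closed_dist_gt_1_iso:
  fixes D :: "real set"
  assumes "countable D" "c \<in> D" and shift: "\<And>d r. d \<in> D \<Longrightarrow> r \<in> \<rat> \<Longrightarrow> d + r \<in> D"
  obtains f where "f ` (\<rat> :: real set) = D"
    "\<forall>q\<in>\<rat>. \<forall>q'\<in>\<rat>. 1 < dist q q' \<longleftrightarrow> 1 < dist (f q) (f q')"
proof -
  obtain g where g: "g ` (\<rat> \<inter> {0..<1::real}) = D \<inter> {c..<c+1}" "strict_mono_on (\<rat> \<inter> {0..<1}) g"
    by (rule rat_shift_closed_unit_interval_iso[OF assms])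
  have rat_shift: "x + of_int k \<in> \<rat>" if "x \<in> \<rat>" for x :: real and k
    using that by simp
  have D_shift: "d + of_int k \<in> D" if "d \<in> D" for d k
    using shift[OF that Rats_of_int] .
  obtain f where f: "f ` (\<rat> :: real set) = D" "strict_mono_on \<rat> f" "\<forall>x. f (x + 1) = f x + 1"
    by (rule periodic_extension[OF rat_shift D_shift g])
  have "\<And>x. x \<in> \<rat> \<Longrightarrow> x + 1 \<in> (\<rat> :: real set)" by simp
  then have "\<forall>q\<in>\<rat>. \<forall>q'\<in>\<rat>. 1 < dist q q' \<longleftrightarrow> 1 < dist (f q) (f q')"
    using strict_mono_on_dist_gt_1_iff[OF f(2) _ f(3)[rule_format]] by blast
  with f(1) show ?thesis by (rule that)
qed

section \<open>Pulling real valuations back to \<open>\<rat>\<close>\<close>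

instance fm :: countable by countable_datatype

lemma sat_pullback:
  fixes f :: "'a \<Rightarrow> 'b"
  assumes rel: "\<And>x x'. x \<in> X \<Longrightarrow> x' \<in> X \<Longrightarrow> R x x' \<longleftrightarrow> S (f x) (f x')"
    and witness: "\<And>a x y. x \<in> X \<Longrightarrow> y \<in> Y \<Longrightarrow> S (f x) y \<Longrightarrow> sat Y S V y a \<Longrightarrow>
      \<exists>x'\<in>X. S (f x) (f x') \<and> sat Y S V (f x') a"
    and into: "f ` X \<subseteq> Y" and "x \<in> X"
  shows "sat X R (\<lambda>p. {x \<in> X. f x \<in> V p}) x a \<longleftrightarrow> sat Y S V (f x) a"
  using \<open>x \<in> X\<close>
proof (induction a arbitrary: x)
  case (Dia a)
  show ?case
  proof
    assume "sat X R (\<lambda>p. {x \<in> X. f x \<in> V p}) x (Dia a)"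
    then obtain x' where "x' \<in> X" "R x x'" "sat X R (\<lambda>p. {x \<in> X. f x \<in> V p}) x' a" by auto
    then show "sat Y S V (f x) (Dia a)" using Dia rel into by auto
  next
    assume "sat Y S V (f x) (Dia a)"
    then obtain y where "y \<in> Y" "S (f x) y" "sat Y S V y a" by auto
    then obtain x' where "x' \<in> X" "S (f x) (f x')" "sat Y S V (f x') a" using witness Dia.prems by blast
    then show "sat X R (\<lambda>p. {x \<in> X. f x \<in> V p}) x (Dia a)" using Dia rel by auto
  qed
qed auto

lemma countable_dense_in_each:
  fixes S :: "'i::countable \<Rightarrow> 'a::{metric_space,second_countable_topology} set"
  obtains E where "countable E" "\<forall>i U. open U \<longrightarrow> S i \<inter> U \<noteq> {} \<longrightarrow> E \<inter> S i \<inter> U \<noteq> {}"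
proof -
  have "\<forall>i. \<exists>T. countable T \<and> T \<subseteq> S i \<and> S i \<subseteq> closure T" using separable by metis
  then obtain T where T: "\<And>i. countable (T i)" "\<And>i. T i \<subseteq> S i" "\<And>i. S i \<subseteq> closure (T i)"
    by metis
  show ?thesis
  proof (rule that[of "\<Union>i. T i"])
    show "countable (\<Union>i. T i)" using T(1) by auto
    show "\<forall>i U. open U \<longrightarrow> S i \<inter> U \<noteq> {} \<longrightarrow> (\<Union>i. T i) \<inter> S i \<inter> U \<noteq> {}"
    proof (intro allI impI)
      fix i U assume U: "open U" "S i \<inter> U \<noteq> {}"
      then have "U \<inter> closure (T i) \<noteq> {}" using T(3) by blast
      then have "U \<inter> T i \<noteq> {}" using open_Int_closure_eq_empty[OF U(1)] by blast
      then show "(\<Union>i. T i) \<inter> S i \<inter> U \<noteq> {}" using T(2) by blast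
    qed
  qed
qed

lemma rat_copy_with_witnesses:
  fixes V :: "nat \<Rightarrow> real set" and x :: real
  obtains f :: "real \<Rightarrow> real" where "x \<in> f ` \<rat>"
    "\<forall>q\<in>\<rat>. \<forall>q'\<in>\<rat>. 1 < dist q q' \<longleftrightarrow> 1 < dist (f q) (f q')"
    "\<forall>a. \<forall>q\<in>\<rat>. \<forall>y. 1 < dist (f q) y \<longrightarrow> sat UNIV (\<lambda>x y. 1 < dist x y) V y a \<longrightarrow>
       (\<exists>q'\<in>\<rat>. 1 < dist (f q) (f q') \<and> sat UNIV (\<lambda>x y. 1 < dist x y) V (f q') a)"
proof -
  let ?R = "\<lambda>x y :: real. 1 < dist x y"
  obtain E where "countable E" and E: "\<forall>a U. open U \<longrightarrow> {y. sat UNIV ?R V y a} \<inter> U \<noteq> {} \<longrightarrow>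
      E \<inter> {y. sat UNIV ?R V y a} \<inter> U \<noteq> {}"
    by (rule countable_dense_in_each[of "\<lambda>a. {y. sat UNIV ?R V y a}"])
  have "countable (insert x E)" using \<open>countable E\<close> by simp
  then obtain D where "countable D" "insert x E \<subseteq> D" and shift: "\<forall>d\<in>D. \<forall>r\<in>\<rat>. d + r \<in> D"
    by (rule countable_rat_shift_hull)
  then have "x \<in> D" by simp
  obtain f where f: "f ` (\<rat> :: real set) = D"
    and rel: "\<forall>q\<in>\<rat>. \<forall>q'\<in>\<rat>. ?R q q' \<longleftrightarrow> ?R (f q) (f q')"
    by (rule rat_shift_closed_dist_gt_1_iso[OF \<open>countable D\<close> \<open>x \<in> D\<close> shift[rule_format]])
  have "\<exists>q'\<in>\<rat>. ?R (f q) (f q') \<and> sat UNIV ?R V (f q') a"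
    if far: "?R (f q) y" and y: "sat UNIV ?R V y a" for q y a
  proof -
    have "open (- cball (f q) 1)" by (intro open_Compl closed_cball)
    moreover have "{y. sat UNIV ?R V y a} \<inter> - cball (f q) 1 \<noteq> {}" using far y by auto
    ultimately have "E \<inter> {y. sat UNIV ?R V y a} \<inter> - cball (f q) 1 \<noteq> {}" by (rule E[rule_format])
    then obtain e where e: "e \<in> E" "sat UNIV ?R V e a" "?R (f q) e" by (auto simp: not_le)
    moreover obtain q' where "q' \<in> \<rat>" "f q' = e" using f e(1) \<open>insert x E \<subseteq> D\<close> by blast
    ultimately show ?thesis by blast
  qed
  then show ?thesis using that f \<open>x \<in> D\<close> rel by blast
qed

lemma Log_gt1_rat_subset_real: "Log_gt1 (\<rat> :: real set) \<subseteq> Log_gt1 (UNIV :: real set)"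
proof
  let ?R = "\<lambda>x y :: real. 1 < dist x y"
  fix \<phi> assume "\<phi> \<in> Log_gt1 (\<rat> :: real set)"
  then have valid: "valid_in \<rat> ?R \<phi>" unfolding Log_gt1_def by simp
  show "\<phi> \<in> Log_gt1 (UNIV :: real set)"
    unfolding Log_gt1_def valid_in_def
  proof (intro CollectI allI impI ballI)
    fix V :: "nat \<Rightarrow> real set" and x :: real
    obtain f where "x \<in> f ` \<rat>" and rel: "\<forall>q\<in>\<rat>. \<forall>q'\<in>\<rat>. ?R q q' \<longleftrightarrow> ?R (f q) (f q')"
      and witness: "\<forall>a. \<forall>q\<in>\<rat>. \<forall>y. ?R (f q) y \<longrightarrow> sat UNIV ?R V y a \<longrightarrow>
         (\<exists>q'\<in>\<rat>. ?R (f q) (f q') \<and> sat UNIV ?R V (f q') a)"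
      by (rule rat_copy_with_witnesses)
    then obtain q where "q \<in> \<rat>" "x = f q" by blast
    have "sat \<rat> ?R (\<lambda>p. {q \<in> \<rat>. f q \<in> V p}) q \<phi>"
      using valid \<open>q \<in> \<rat>\<close> unfolding valid_in_def
      by (elim allE[of _ "\<lambda>p. {q \<in> \<rat>. f q \<in> V p}"]) auto
    moreover have "sat \<rat> ?R (\<lambda>p. {q \<in> \<rat>. f q \<in> V p}) q \<phi> \<longleftrightarrow> sat UNIV ?R V (f q) \<phi>"
      by (rule sat_pullback[where R = ?R and S = ?R and f = f, OF rel[rule_format]])
        (use witness \<open>q \<in> \<rat>\<close> in blast)+
    ultimately show "sat UNIV ?R V x \<phi>" using \<open>x = f q\<close> by simp
  qed
qed

section \<open>A formula valid on \<open>\<real>\<close> but not on \<open>\<rat>\<close>\<close>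

definition Neg :: "fm \<Rightarrow> fm" where "Neg a = Imp a Bot"
definition Conj :: "fm \<Rightarrow> fm \<Rightarrow> fm" where "Conj a b = Neg (Imp a (Neg b))"
definition Disj :: "fm \<Rightarrow> fm \<Rightarrow> fm" where "Disj a b = Imp (Neg a) b"
definition Iff :: "fm \<Rightarrow> fm \<Rightarrow> fm" where "Iff a b = Conj (Imp a b) (Imp b a)"
definition Box :: "fm \<Rightarrow> fm" where "Box a = Neg (Dia (Neg a))"

lemma sat_Neg [simp]: "sat X R V x (Neg a) \<longleftrightarrow> \<not> sat X R V x a"
  by (simp add: Neg_def)

lemma sat_Conj [simp]: "sat X R V x (Conj a b) \<longleftrightarrow> sat X R V x a \<and> sat X R V x b"
  by (simp add: Conj_def)

lemma sat_Disj [simp]: "sat X R V x (Disj a b) \<longleftrightarrow> sat X R V x a \<or> sat X R V x b"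
  by (auto simp: Disj_def)

lemma sat_Iff [simp]: "sat X R V x (Iff a b) \<longleftrightarrow> (sat X R V x a \<longleftrightarrow> sat X R V x b)"
  by (auto simp: Iff_def)

lemma sat_Box [simp]: "sat X R V x (Box a) \<longleftrightarrow> (\<forall>y\<in>X. R x y \<longrightarrow> sat X R V y a)"
  by (simp add: Box_def)

definition unit_interval_fm :: "nat \<Rightarrow> fm" where
  "unit_interval_fm p = Iff (Var p) (Neg (Dia (Var p)))"

definition interval_cover_fm :: fm where
  "interval_cover_fm =
    Conj (unit_interval_fm 0) (Conj (unit_interval_fm 1) (Conj (unit_interval_fm 2)
      (Conj (Neg (Conj (Var 0) (Var 1))) (Imp (Var 2) (Disj (Var 0) (Var 1))))))"

definition interval_split_fm :: fm where
  "interval_split_fm =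
    Conj (Box (Box interval_cover_fm))
      (Conj (Dia (Dia (Conj (Var 2) (Neg (Var 0))))) (Dia (Dia (Conj (Var 2) (Neg (Var 1))))))"

lemma real_dist_gt_1_common_neighbour:
  fixes x y :: real
  obtains z where "1 < dist x z" "1 < dist z y"
proof
  show "1 < dist x (\<bar>x\<bar> + \<bar>y\<bar> + 2)" "1 < dist (\<bar>x\<bar> + \<bar>y\<bar> + 2) y"
    unfolding dist_real_def by (simp_all add: abs_real_def)
qed

lemma sat_Box_Box_real:
  "sat UNIV (\<lambda>x y :: real. 1 < dist x y) V x (Box (Box a)) \<longleftrightarrow>
    (\<forall>y. sat UNIV (\<lambda>x y :: real. 1 < dist x y) V y a)"
proof
  assume box: "sat UNIV (\<lambda>x y :: real. 1 < dist x y) V x (Box (Box a))"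
  show "\<forall>y. sat UNIV (\<lambda>x y :: real. 1 < dist x y) V y a"
  proof
    fix y
    obtain z where "1 < dist x z" "1 < dist z y" by (rule real_dist_gt_1_common_neighbour)
    then show "sat UNIV (\<lambda>x y :: real. 1 < dist x y) V y a" using box by simp
  qed
qed simp

lemma sat_Dia_Dia_real:
  "sat UNIV (\<lambda>x y :: real. 1 < dist x y) V x (Dia (Dia a)) \<longleftrightarrow>
    (\<exists>y. sat UNIV (\<lambda>x y :: real. 1 < dist x y) V y a)"
proof
  assume "\<exists>y. sat UNIV (\<lambda>x y :: real. 1 < dist x y) V y a"
  then obtain y where "sat UNIV (\<lambda>x y :: real. 1 < dist x y) V y a" ..
  moreover obtain z where "1 < dist x z" "1 < dist z y" by (rule real_dist_gt_1_common_neighbour)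
  ultimately show "sat UNIV (\<lambda>x y :: real. 1 < dist x y) V x (Dia (Dia a))" by auto
qed auto

lemma unit_interval_fm_real:
  assumes "\<And>y. sat UNIV (\<lambda>x y :: real. 1 < dist x y) V y (unit_interval_fm p)"
  shows "closed (V p) \<and> connected (V p)"
proof -
  have "V p = (\<Inter>w\<in>V p. cball w 1)"
  proof (rule set_eqI)
    fix y
    have "y \<in> V p \<longleftrightarrow> (\<forall>w\<in>V p. dist w y \<le> 1)"
      using assms[of y] unfolding unit_interval_fm_def by (simp add: not_less dist_commute) blast
    then show "y \<in> V p \<longleftrightarrow> y \<in> (\<Inter>w\<in>V p. cball w 1)" by (simp only: INT_iff mem_cball)
  qed
  then have "closed (V p)" "convex (V p)"
    by (metis closed_INT closed_cball, metis convex_INT convex_cball)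
  then show ?thesis using convex_connected by blast
qed

lemma Neg_interval_split_valid_real: "Neg interval_split_fm \<in> Log_gt1 (UNIV :: real set)"
  unfolding Log_gt1_def valid_in_def
proof (intro CollectI allI impI ballI)
  let ?R = "\<lambda>x y :: real. 1 < dist x y"
  fix V :: "nat \<Rightarrow> real set" and x :: real
  have "\<not> sat UNIV ?R V x interval_split_fm"
  proof
    assume "sat UNIV ?R V x interval_split_fm"
    then have cover: "\<And>y. sat UNIV ?R V y interval_cover_fm"
      and "\<not> V 2 \<subseteq> V 0" "\<not> V 2 \<subseteq> V 1"
      unfolding interval_split_fm_def sat_Conj sat_Box_Box_real sat_Dia_Dia_real by auto
    then have "\<And>y. sat UNIV ?R V y (unit_interval_fm p)" if "p \<le> 2" for p
      using that unfolding interval_cover_fm_def by (auto simp: le_Suc_eq numeral_2_eq_2)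
    then have "closed (V 0)" "closed (V 1)" "connected (V 2)"
      using unit_interval_fm_real by simp_all
    moreover have "V 0 \<inter> V 1 = {}" "V 2 \<subseteq> V 0 \<union> V 1"
      using cover unfolding interval_cover_fm_def by auto
    ultimately show False
      using connected_closedD[of "V 2" "V 0" "V 1"] \<open>\<not> V 2 \<subseteq> V 0\<close> \<open>\<not> V 2 \<subseteq> V 1\<close> by blast
  qed
  then show "sat UNIV ?R V x (Neg interval_split_fm)" by simp
qed

lemma rat_interval_far_point_iff:
  fixes y a :: real
  shows "(\<exists>z\<in>\<rat>. 1 < dist y z \<and> z \<in> \<rat> \<inter> {a..a+1}) \<longleftrightarrow> y < a \<or> a + 1 < y"
proof
  assume "\<exists>z\<in>\<rat>. 1 < dist y z \<and> z \<in> \<rat> \<inter> {a..a+1}"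
  then show "y < a \<or> a + 1 < y" by (auto simp: dist_real_def)
next
  assume "y < a \<or> a + 1 < y"
  then consider "y < a" | "a + 1 < y" by blast
  then show "\<exists>z\<in>\<rat>. 1 < dist y z \<and> z \<in> \<rat> \<inter> {a..a+1}"
  proof cases
    case 1
    obtain r where "r \<in> \<rat>" "max a (y + 1) < r" "r < a + 1"
      using Rats_dense_in_real[of "max a (y + 1)" "a + 1"] 1 by auto
    then show ?thesis by (intro bexI[of _ r]) (auto simp: dist_real_def)
  next
    case 2
    obtain r where "r \<in> \<rat>" "a < r" "r < min (a + 1) (y - 1)"
      using Rats_dense_in_real[of a "min (a + 1) (y - 1)"] 2 by auto
    then show ?thesis by (intro bexI[of _ r]) (auto simp: dist_real_def)
  qed
qed

lemma sat_unit_interval_fm_rat: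
  assumes "V p = \<rat> \<inter> {a..a+1}" "y \<in> \<rat>"
  shows "sat \<rat> (\<lambda>x y :: real. 1 < dist x y) V y (unit_interval_fm p)"
  using rat_interval_far_point_iff[of y a] assms unfolding unit_interval_fm_def by auto

lemma sat_interval_split_rat:
  fixes c :: real
  assumes c: "0 < c" "c < 1" "c \<notin> \<rat>"
  defines "V \<equiv> \<lambda>p :: nat. if p = 0 then \<rat> \<inter> {c - 1..c} else if p = 1 then \<rat> \<inter> {c..c + 1}
    else \<rat> \<inter> {0..1}"
  shows "sat \<rat> (\<lambda>x y :: real. 1 < dist x y) V 0 interval_split_fm"
proof -
  let ?R = "\<lambda>x y :: real. 1 < dist x y"
  have V: "V 0 = \<rat> \<inter> {c - 1..c - 1 + 1}" "V 1 = \<rat> \<inter> {c..c + 1}" "V 2 = \<rat> \<inter> {0..0 + 1}"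
    unfolding V_def by simp_all
  have cover: "sat \<rat> ?R V y interval_cover_fm" if "y \<in> \<rat>" for y
  proof -
    have "y \<noteq> c" using that c(3) by blast
    then show ?thesis
      using sat_unit_interval_fm_rat[of V, OF V(1) that] sat_unit_interval_fm_rat[of V, OF V(2) that]
        sat_unit_interval_fm_rat[of V, OF V(3) that] c(1,2)
      unfolding interval_cover_fm_def by (auto simp: V_def)
  qed
  have reach: "sat \<rat> ?R V 0 (Dia (Dia a))" if "sat \<rat> ?R V y a" "y \<in> {0, 1}" for a y
  proof -
    have "3 \<in> \<rat>" "y \<in> \<rat>" "?R 0 3" "?R 3 y" using that(2) by (auto simp: dist_real_def)
    then show ?thesis using that(1) by (simp only: sat.simps) blast
  qed
  have "sat \<rat> ?R V 0 (Dia (Dia (Conj (Var 2) (Neg (Var 0)))))"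
    by (rule reach[where y = 1]) (use c in \<open>auto simp: V_def\<close>)
  moreover have "sat \<rat> ?R V 0 (Dia (Dia (Conj (Var 2) (Neg (Var 1)))))"
    by (rule reach[where y = 0]) (use c in \<open>auto simp: V_def\<close>)
  ultimately show ?thesis unfolding interval_split_fm_def using cover by simp
qed

lemma Neg_interval_split_not_valid_rat: "Neg interval_split_fm \<notin> Log_gt1 (\<rat> :: real set)"
proof
  assume "Neg interval_split_fm \<in> Log_gt1 (\<rat> :: real set)"
  then have valid: "valid_in \<rat> (\<lambda>x y :: real. 1 < dist x y) (Neg interval_split_fm)"
    unfolding Log_gt1_def by simp
  have "\<not> {0<..<1::real} \<subseteq> \<rat>"
    using countable_subset countable_rat uncountable_open_interval[of 0 1] by auto
  then obtain c where "c \<in> {0<..<1::real}" "c \<notin> \<rat>" by blast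
  then have "0 < c" "c < 1" "c \<notin> \<rat>" by auto
  from sat_interval_split_rat[OF this] valid show False unfolding valid_in_def by auto
qed

theorem theorem4p8:
  shows "Log_gt1 (\<rat> :: real set) \<subset> Log_gt1 (UNIV :: real set)"
  using Log_gt1_rat_subset_real Neg_interval_split_valid_real Neg_interval_split_not_valid_rat
  by blast

end
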